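(* Let $r \geq 1$ and $d \geq 1$ be integers. Let $H$ be a bipartite graph with bipartition $(V_1,V_2)$ and $m$ edges, such that there are $r$ vertices in $V_1$ each of which is adjacent to every vertex of $V_2$, and every vertex of $V_1$ has degree at least $d$. Then for every graph $G$, $$t_{H}(G) \geq t_{K_{r,d}}(G)^{\frac{m}{rd}}.$$
   Context: All graphs are finite and simple. A homomorphism from a graph $H$ to a graph $G$ is a map $f:V(H)\to V(G)$ such that $(f(u),f(v))$ is an edge of $G$ for every edge $(u,v)$ of $H$. Let $h_H(G)$ denote the number of homomorphisms from $H$ to $G$, and $t_H(G)=h_H(G)/|V(G)|^{|V(H)|}$ (the fraction of all maps $V(H)\to V(G)$ that are homomorphisms). $K_{r,d}$ denotes the complete bipartite graph with parts of sizes $r$ and $d$. *)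

theory Defs
  imports Complex_Main "HOL-Library.FuncSet"
begin

definition simple_graph :: "'a set \<Rightarrow> ('a \<Rightarrow> 'a \<Rightarrow> bool) \<Rightarrow> bool" where
  "simple_graph V E \<longleftrightarrow> finite V \<and> (\<forall>u v. E u v \<longrightarrow> u \<in> V \<and> v \<in> V)
     \<and> (\<forall>u v. E u v \<longrightarrow> E v u) \<and> (\<forall>u. \<not> E u u)"

definition num_edges :: "'a set \<Rightarrow> ('a \<Rightarrow> 'a \<Rightarrow> bool) \<Rightarrow> nat" where
  "num_edges V E = card {{u, v} | u v. u \<in> V \<and> v \<in> V \<and> E u v}"

definition degree :: "'a set \<Rightarrow> ('a \<Rightarrow> 'a \<Rightarrow> bool) \<Rightarrow> 'a \<Rightarrow> nat" where
  "degree V E x = card {y \<in> V. E x y}"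

definition homs :: "'a set \<Rightarrow> ('a \<Rightarrow> 'a \<Rightarrow> bool) \<Rightarrow> 'b set \<Rightarrow> ('b \<Rightarrow> 'b \<Rightarrow> bool) \<Rightarrow> ('a \<Rightarrow> 'b) set" where
  "homs VH EH VG EG = {f \<in> VH \<rightarrow>\<^sub>E VG. \<forall>u v. EH u v \<longrightarrow> EG (f u) (f v)}"

definition hom_count :: "'a set \<Rightarrow> ('a \<Rightarrow> 'a \<Rightarrow> bool) \<Rightarrow> 'b set \<Rightarrow> ('b \<Rightarrow> 'b \<Rightarrow> bool) \<Rightarrow> nat" where
  "hom_count VH EH VG EG = card (homs VH EH VG EG)"

definition hom_density :: "'a set \<Rightarrow> ('a \<Rightarrow> 'a \<Rightarrow> bool) \<Rightarrow> 'b set \<Rightarrow> ('b \<Rightarrow> 'b \<Rightarrow> bool) \<Rightarrow> real" where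
  "hom_density VH EH VG EG = real (hom_count VH EH VG EG) / real (card VG) ^ card VH"

definition Krd_verts :: "nat \<Rightarrow> nat \<Rightarrow> (nat + nat) set" where
  "Krd_verts r d = Inl ` {..<r} \<union> Inr ` {..<d}"

definition Krd_edge :: "nat \<Rightarrow> nat \<Rightarrow> (nat + nat) \<Rightarrow> (nat + nat) \<Rightarrow> bool" where
  "Krd_edge r d x y \<longleftrightarrow>
     (\<exists>i j. i < r \<and> j < d \<and> ((x = Inl i \<and> y = Inr j) \<or> (x = Inr j \<and> y = Inl i)))"

end

(*
  Proof idea: an entropy argument.  Fix R of size r in V1 that is complete to V2, and let P = V1 - R.
  Let nu be the law of the random map f from V(H) to V(G) that chooses f on R with probability
  proportional to (number of common neighbours of f(R))^d -- the law of the R-side of a uniformly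
  random homomorphism of K_{r,d} -- then sends each vertex of V2 uniformly into the common
  neighbourhood of f(R), and then each x in P uniformly into the common neighbourhood of the image of
  its neighbourhood S(x).  Such an f is always a homomorphism of H, so Gibbs' inequality bounds the
  entropy of nu by log h_H(G).  Three further Gibbs inequalities bound the averages of the logarithms
  of the co-degrees of f(R) and f(S(x)) from below in terms of log h_{K_{r,d}}(G).  A combination of
  the four with nonnegative weights makes every co-degree term cancel, and leaves exactly the
  logarithm of the claimed inequality; the weights are nonnegative because e(H) >= d |V1|.
*)

theory Submission
  imports Defs
begin

section \<open>Sums over finite function spaces\<close>

lemma sum_PiE_Un_override_on:
  assumes "finite X" "finite Y" "X \<inter> Y = {}"
  shows "(\<Sum>f\<in>PiE (X \<union> Y) B. F f) = (\<Sum>a\<in>PiE X B. \<Sum>b\<in>PiE Y B. F (override_on b a X))"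
proof -
  have "(\<Sum>f\<in>PiE (X \<union> Y) B. F f) = (\<Sum>(a, b)\<in>PiE X B \<times> PiE Y B. F (override_on b a X))"
    by (rule sum.reindex_bij_witness[of _ "\<lambda>(a, b). override_on b a X" "\<lambda>f. (restrict f X, restrict f Y)"])
       (use assms in \<open>auto simp: PiE_def extensional_def override_on_def fun_eq_iff Pi_def
                              intro!: arg_cong[where f = F]\<close>)
  then show ?thesis
    by (simp add: sum.cartesian_product)
qed

lemma sum_PiE_indicator:
  fixes c :: "'c::comm_semiring_1"
  assumes "finite A" "finite V" "\<And>x. x \<in> A \<Longrightarrow> N x \<subseteq> V"
  shows "(\<Sum>b\<in>PiE A (\<lambda>_. V). if \<forall>x\<in>A. b x \<in> N x then c else 0) = c * of_nat (\<Prod>x\<in>A. card (N x))"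
proof -
  have "{b \<in> PiE A (\<lambda>_. V). \<forall>x\<in>A. b x \<in> N x} = PiE A N"
    using assms(3) by (auto simp: PiE_def Pi_def)
  then show ?thesis
    using assms by (simp add: sum.inter_filter[symmetric] finite_PiE card_PiE mult.commute)
qed

lemma sum_PiE_indicator_const:
  fixes c :: "'c::comm_semiring_1"
  assumes "finite A" "finite V" "N \<subseteq> V"
  shows "(\<Sum>b\<in>PiE A (\<lambda>_. V). if \<forall>x\<in>A. b x \<in> N then c else 0) = c * of_nat (card N ^ card A)"
  using sum_PiE_indicator[of A V "\<lambda>_. N" c] assms by simp

lemma sum_PiE_indicator_restrict:
  fixes G :: "('a \<Rightarrow> 'b) \<Rightarrow> 'c::comm_semiring_1"
  assumes "finite A" "finite V" "X \<subseteq> A" "N \<subseteq> V"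
    and G: "\<And>g g'. (\<forall>i\<in>X. g i = g' i) \<Longrightarrow> G g = G g'"
  shows "(\<Sum>g\<in>PiE A (\<lambda>_. V). if \<forall>v\<in>A. g v \<in> N then G g else 0) =
         of_nat (card N ^ card (A - X)) * (\<Sum>y\<in>PiE X (\<lambda>_. V). if \<forall>v\<in>X. y v \<in> N then G y else 0)"
proof -
  have "finite X"
    using assms(1,3) finite_subset by blast
  have A_eq: "A = X \<union> (A - X)"
    using assms(3) by blast
  have "(\<Sum>g\<in>PiE A (\<lambda>_. V). if \<forall>v\<in>A. g v \<in> N then G g else 0) =
        (\<Sum>y\<in>PiE X (\<lambda>_. V). \<Sum>b\<in>PiE (A - X) (\<lambda>_. V).
           (if \<forall>v\<in>X. y v \<in> N then G y else 0) * (if \<forall>v\<in>A - X. b v \<in> N then 1 else 0))"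
  proof (subst A_eq, subst sum_PiE_Un_override_on, use assms(1) \<open>finite X\<close> in auto,
         intro sum.cong refl)
    fix y b assume "b \<in> PiE (A - X) (\<lambda>_. V)"
    have "G (override_on b y X) = G y"
      by (rule G) simp
    moreover have "(\<forall>v\<in>A. override_on b y X v \<in> N) \<longleftrightarrow> (\<forall>v\<in>X. y v \<in> N) \<and> (\<forall>v\<in>A - X. b v \<in> N)"
      using assms(3) by (auto simp: override_on_def)
    ultimately show "(if \<forall>v\<in>A. override_on b y X v \<in> N then G (override_on b y X) else 0) =
        (if \<forall>v\<in>X. y v \<in> N then G y else 0) * (if \<forall>v\<in>A - X. b v \<in> N then 1 else 0)"
      by simp
  qed
  also have "\<dots> = (\<Sum>y\<in>PiE X (\<lambda>_. V). (if \<forall>v\<in>X. y v \<in> N then G y else 0) * of_nat (card N ^ card (A - X)))"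
    by (simp add: sum_distrib_left[symmetric] sum_PiE_indicator_const assms)
  finally show ?thesis
    by (simp add: sum_distrib_left mult.commute)
qed

section \<open>Common neighbourhoods\<close>

definition common_nbrs :: "'b set \<Rightarrow> ('b \<Rightarrow> 'b \<Rightarrow> bool) \<Rightarrow> ('a \<Rightarrow> 'b) \<Rightarrow> 'a set \<Rightarrow> 'b set" where
  "common_nbrs V E f X = {w \<in> V. \<forall>u\<in>X. E (f u) w}"

lemma common_nbrs_subset: "common_nbrs V E f X \<subseteq> V"
  by (auto simp: common_nbrs_def)

lemma common_nbrs_cong: "(\<And>u. u \<in> X \<Longrightarrow> f u = g u) \<Longrightarrow> common_nbrs V E f X = common_nbrs V E g X"
  by (auto simp: common_nbrs_def)

lemma sum_PiE_common_nbrs_swap: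
  fixes G :: "('c \<Rightarrow> 'b) \<Rightarrow> 'd::comm_semiring_1"
  assumes sym: "\<And>u v. E u v \<Longrightarrow> E v u" and "finite A" "finite B" "finite V"
  shows "(\<Sum>z\<in>PiE A (\<lambda>_. V). \<Sum>y\<in>PiE B (\<lambda>_. V). if \<forall>v\<in>B. y v \<in> common_nbrs V E z A then G y else 0) =
         (\<Sum>y\<in>PiE B (\<lambda>_. V). G y * of_nat (card (common_nbrs V E y B) ^ card A))"
proof -
  have adj: "(\<forall>v\<in>B. y v \<in> common_nbrs V E z A) \<longleftrightarrow> (\<forall>i\<in>A. z i \<in> common_nbrs V E y B)"
    if "z \<in> PiE A (\<lambda>_. V)" "y \<in> PiE B (\<lambda>_. V)" for z y
    using that sym by (auto simp: common_nbrs_def PiE_def Pi_def)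
  have "(\<Sum>z\<in>PiE A (\<lambda>_. V). \<Sum>y\<in>PiE B (\<lambda>_. V). if \<forall>v\<in>B. y v \<in> common_nbrs V E z A then G y else 0) =
        (\<Sum>y\<in>PiE B (\<lambda>_. V). \<Sum>z\<in>PiE A (\<lambda>_. V). if \<forall>i\<in>A. z i \<in> common_nbrs V E y B then G y else 0)"
    by (subst sum.swap) (simp add: adj cong: sum.cong)
  then show ?thesis
    by (simp add: sum_PiE_indicator_const assms common_nbrs_subset)
qed

lemma sum_card_common_nbrs_power_swap:
  assumes "\<And>u v. E u v \<Longrightarrow> E v u" "finite A" "finite B" "finite V"
  shows "(\<Sum>z\<in>PiE A (\<lambda>_. V). card (common_nbrs V E z A) ^ card B) =
         (\<Sum>y\<in>PiE B (\<lambda>_. V). card (common_nbrs V E y B) ^ card A)"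
proof -
  have "(\<Sum>z\<in>PiE A (\<lambda>_. V). card (common_nbrs V E z A) ^ card B) =
        (\<Sum>z\<in>PiE A (\<lambda>_. V). \<Sum>y\<in>PiE B (\<lambda>_. V). if \<forall>v\<in>B. y v \<in> common_nbrs V E z A then 1 else 0)"
    by (simp add: sum_PiE_indicator_const assms common_nbrs_subset)
  also have "\<dots> = (\<Sum>y\<in>PiE B (\<lambda>_. V). card (common_nbrs V E y B) ^ card A)"
    by (simp add: sum_PiE_common_nbrs_swap assms)
  finally show ?thesis .
qed

text \<open>Both sides count the homomorphisms of a complete bipartite graph with parts of sizes
  card A and k.\<close>
lemma sum_card_common_nbrs_power_card_cong:
  assumes "\<And>u v. E u v \<Longrightarrow> E v u" "finite A" "finite A'" "card A = card A'" "finite V"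
  shows "(\<Sum>z\<in>PiE A (\<lambda>_. V). card (common_nbrs V E z A) ^ k) =
         (\<Sum>z\<in>PiE A' (\<lambda>_. V). card (common_nbrs V E z A') ^ k)"
  using sum_card_common_nbrs_power_swap[of E A "{..<k}" V] sum_card_common_nbrs_power_swap[of E A' "{..<k}" V]
    assms by simp

section \<open>Edges and homomorphisms of bipartite graphs\<close>

lemma num_edges_bipartite:
  assumes H: "simple_graph VH EH" and "V1 \<union> V2 = VH" "V1 \<inter> V2 = {}"
    and bip: "\<forall>u v. EH u v \<longrightarrow> (u \<in> V1 \<longleftrightarrow> v \<in> V2)"
  shows "num_edges VH EH = (\<Sum>x\<in>V1. degree VH EH x)"
proof -
  have "finite VH" and inV: "\<And>u v. EH u v \<Longrightarrow> u \<in> VH \<and> v \<in> VH"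
    and sym: "\<And>u v. EH u v \<Longrightarrow> EH v u"
    using H by (auto simp: simple_graph_def)
  let ?arcs = "SIGMA x:V1. {y \<in> VH. EH x y}"
  have "bij_betw (\<lambda>(x, y). {x, y}) ?arcs {{u, v} | u v. u \<in> VH \<and> v \<in> VH \<and> EH u v}"
  proof (rule bij_betwI')
    fix p q assume "p \<in> ?arcs" "q \<in> ?arcs"
    then show "((\<lambda>(x, y). {x, y}) p = (\<lambda>(x, y). {x, y}) q) = (p = q)"
      using bip assms(3) by (auto simp: doubleton_eq_iff)
  next
    fix p assume "p \<in> ?arcs"
    then show "(\<lambda>(x, y). {x, y}) p \<in> {{u, v} | u v. u \<in> VH \<and> v \<in> VH \<and> EH u v}"
      using assms(2) by auto
  next
    fix e assume "e \<in> {{u, v} | u v. u \<in> VH \<and> v \<in> VH \<and> EH u v}"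
    then obtain u v where e: "e = {u, v}" "EH u v"
      by auto
    then consider "u \<in> V1" | "v \<in> V1"
      using bip inV assms(2) by blast
    then show "\<exists>p\<in>?arcs. e = (\<lambda>(x, y). {x, y}) p"
    proof cases
      case 1
      then show ?thesis
        using e inV by auto
    next
      case 2
      then show ?thesis
        using e inV sym by (intro bexI[of _ "(v, u)"]) auto
    qed
  qed
  then have "num_edges VH EH = card ?arcs"
    by (simp add: num_edges_def bij_betw_same_card)
  also have "\<dots> = (\<Sum>x\<in>V1. degree VH EH x)"
    using \<open>finite VH\<close> assms(2) by (subst card_SigmaI) (auto simp: degree_def)
  finally show ?thesis .
qed

lemma degree_complete_vertex:
  assumes "V1 \<union> V2 = VH" and bip: "\<forall>u v. EH u v \<longrightarrow> (u \<in> V1 \<longleftrightarrow> v \<in> V2)"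
    and "x \<in> V1" "\<forall>y\<in>V2. EH x y"
  shows "degree VH EH x = card V2"
proof -
  have "{y \<in> VH. EH x y} = V2"
    using assms by auto
  then show ?thesis
    by (simp add: degree_def)
qed

lemma num_edges_complete_part:
  assumes "simple_graph VH EH" "V1 \<union> V2 = VH" "V1 \<inter> V2 = {}"
    and bip: "\<forall>u v. EH u v \<longrightarrow> (u \<in> V1 \<longleftrightarrow> v \<in> V2)"
    and R: "R \<subseteq> V1" "\<forall>x\<in>R. \<forall>y\<in>V2. EH x y"
  shows "num_edges VH EH = card R * card V2 + (\<Sum>x\<in>V1 - R. degree VH EH x)"
proof -
  have "finite V1"
    using assms(1,2) by (auto simp: simple_graph_def)
  have "num_edges VH EH = (\<Sum>x\<in>V1 - R. degree VH EH x) + (\<Sum>x\<in>R. degree VH EH x)"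
    using num_edges_bipartite[OF assms(1-4)] sum.subset_diff[OF R(1) \<open>finite V1\<close>] by simp
  also have "(\<Sum>x\<in>R. degree VH EH x) = (\<Sum>x\<in>R. card V2)"
    using R by (intro sum.cong refl degree_complete_vertex[OF assms(2) bip]) auto
  finally show ?thesis
    by simp
qed

lemma card_mult_le_num_edges:
  assumes "simple_graph VH EH" "V1 \<union> V2 = VH" "V1 \<inter> V2 = {}"
    and "\<forall>u v. EH u v \<longrightarrow> (u \<in> V1 \<longleftrightarrow> v \<in> V2)"
    and "\<forall>x\<in>V1. degree VH EH x \<ge> d"
  shows "card V1 * d \<le> num_edges VH EH"
  using num_edges_bipartite[OF assms(1-4)] sum_bounded_below[of V1 d "degree VH EH"] assms(5) by simp

lemma bipartite_edge_cases:
  assumes "simple_graph VH EH" "V1 \<union> V2 = VH" "V1 \<inter> V2 = {}"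
    and "\<forall>u v. EH u v \<longrightarrow> (u \<in> V1 \<longleftrightarrow> v \<in> V2)" and "R \<subseteq> V1" and e: "EH u v"
  shows "(u \<in> R \<and> v \<in> V2) \<or> (v \<in> R \<and> u \<in> V2) \<or> (u \<in> V1 - R \<and> v \<in> {y \<in> VH. EH u y})
           \<or> (v \<in> V1 - R \<and> u \<in> {y \<in> VH. EH v y})"
proof -
  have "u \<in> VH" "v \<in> VH" "EH v u"
    using e assms(1) by (auto simp: simple_graph_def)
  then show ?thesis
    using e assms(2-5) by auto
qed

lemma finite_homs:
  assumes "simple_graph VH EH" "simple_graph VG EG"
  shows "finite (homs VH EH VG EG)"
proof (rule finite_subset)
  show "homs VH EH VG EG \<subseteq> PiE VH (\<lambda>_. VG)"
    by (auto simp: homs_def)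
  show "finite (PiE VH (\<lambda>_. VG))"
    using assms by (simp add: simple_graph_def finite_PiE)
qed

lemma hom_count_Krd:
  assumes "finite VG" and sym: "\<And>u v. EG u v \<Longrightarrow> EG v u"
  shows "hom_count (Krd_verts r d) (Krd_edge r d) VG EG =
         (\<Sum>z\<in>PiE (Inl ` {..<r} :: (nat + nat) set) (\<lambda>_. VG). card (common_nbrs VG EG z (Inl ` {..<r})) ^ d)"
proof -
  let ?A = "Inl ` {..<r} :: (nat + nat) set" and ?B = "Inr ` {..<d} :: (nat + nat) set"
  have "homs (Krd_verts r d) (Krd_edge r d) VG EG = {f \<in> PiE (?A \<union> ?B) (\<lambda>_. VG). \<forall>i\<in>?A. \<forall>j\<in>?B. EG (f i) (f j)}"
    by (auto simp: homs_def Krd_verts_def Krd_edge_def intro: sym)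
  then have "hom_count (Krd_verts r d) (Krd_edge r d) VG EG =
        (\<Sum>f\<in>PiE (?A \<union> ?B) (\<lambda>_. VG). if \<forall>i\<in>?A. \<forall>j\<in>?B. EG (f i) (f j) then 1 else 0)"
    using \<open>finite VG\<close> by (simp add: hom_count_def sum.inter_filter[symmetric] finite_PiE)
  also have "\<dots> = (\<Sum>z\<in>PiE ?A (\<lambda>_. VG). \<Sum>y\<in>PiE ?B (\<lambda>_. VG).
                     if \<forall>j\<in>?B. y j \<in> common_nbrs VG EG z ?A then 1 else 0)"
    by (subst sum_PiE_Un_override_on) (auto simp: common_nbrs_def PiE_def Pi_def override_on_def image_iff intro!: sum.cong)
  also have "\<dots> = (\<Sum>z\<in>PiE ?A (\<lambda>_. VG). card (common_nbrs VG EG z ?A) ^ d)"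
    using \<open>finite VG\<close>
    by (intro sum.cong refl, subst sum_PiE_indicator_const) (auto simp: common_nbrs_subset card_image)
  finally show ?thesis .
qed

lemma card_Krd_verts: "card (Krd_verts r d) = r + d"
  unfolding Krd_verts_def by (subst card_Un_disjoint) (auto simp: card_image)

section \<open>The entropy argument\<close>

lemma gibbs_inequality:
  fixes \<nu> \<rho> :: "'a \<Rightarrow> real"
  assumes "finite \<Omega>" "\<And>w. w \<in> \<Omega> \<Longrightarrow> \<nu> w \<ge> 0" "sum \<nu> \<Omega> = 1"
    and "\<And>w. w \<in> \<Omega> \<Longrightarrow> \<nu> w > 0 \<Longrightarrow> \<rho> w > 0" "(\<Sum>w\<in>\<Omega>. \<nu> w * \<rho> w) \<le> 1"
  shows "(\<Sum>w\<in>\<Omega>. \<nu> w * ln (\<rho> w)) \<le> 0"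
proof -
  have "(\<Sum>w\<in>\<Omega>. \<nu> w * ln (\<rho> w)) \<le> (\<Sum>w\<in>\<Omega>. \<nu> w * (\<rho> w - 1))"
  proof (rule sum_mono)
    fix w assume w: "w \<in> \<Omega>"
    show "\<nu> w * ln (\<rho> w) \<le> \<nu> w * (\<rho> w - 1)"
    proof (cases "\<nu> w = 0")
      case False
      then have "\<nu> w > 0"
        using assms(2)[OF w] by simp
      then show ?thesis
        using assms(4)[OF w] ln_le_minus_one by (simp add: mult_left_mono)
    qed simp
  qed
  also have "\<dots> = (\<Sum>w\<in>\<Omega>. \<nu> w * \<rho> w) - 1"
    using assms(3) by (simp add: right_diff_distrib sum_subtractf)
  finally show ?thesis
    using assms(5) by linarith
qed

text \<open>The pattern is a bipartite graph with parts R \<union> P and V2, in which R is complete to V2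
  and x \<in> P has neighbourhood S x; maps are the maps of its vertex set into the host graph
  (VG, EG).\<close>
locale bipartite_pattern =
  fixes VG :: "'b set" and EG :: "'b \<Rightarrow> 'b \<Rightarrow> bool"
    and R V2 P :: "'a set" and S :: "'a \<Rightarrow> 'a set" and d :: nat
  assumes finite_VG: "finite VG" and sym_EG: "\<And>u v. EG u v \<Longrightarrow> EG v u"
    and finite_R: "finite R" and finite_V2: "finite V2" and finite_P: "finite P"
    and R_V2_disjoint: "R \<inter> V2 = {}" and R_P_disjoint: "R \<inter> P = {}"
    and V2_P_disjoint: "V2 \<inter> P = {}"
    and S_subset: "\<And>x. x \<in> P \<Longrightarrow> S x \<subseteq> V2"
    and S_nonempty: "\<And>x. x \<in> P \<Longrightarrow> S x \<noteq> {}"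
    and R_nonempty: "R \<noteq> {}" and d_pos: "0 < d"
begin

abbreviation codeg :: "('a \<Rightarrow> 'b) \<Rightarrow> 'a set \<Rightarrow> real" where
  "codeg f X \<equiv> real (card (common_nbrs VG EG f X))"

abbreviation maps :: "('a \<Rightarrow> 'b) set" where
  "maps \<equiv> PiE (R \<union> V2 \<union> P) (\<lambda>_. VG)"

definition R_V2_adjacent :: "('a \<Rightarrow> 'b) \<Rightarrow> bool" where
  "R_V2_adjacent f \<longleftrightarrow> (\<forall>i\<in>R. \<forall>v\<in>V2. EG (f i) (f v))"

definition P_adjacent :: "('a \<Rightarrow> 'b) \<Rightarrow> bool" where
  "P_adjacent f \<longleftrightarrow> (\<forall>x\<in>P. \<forall>v\<in>S x. EG (f v) (f x))"

definition Krd_count :: real where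
  "Krd_count = (\<Sum>z\<in>PiE R (\<lambda>_. VG). codeg z R ^ d)"

text \<open>The law of a random map: the image z of R is drawn with probability proportional to
  codeg z R ^ d, then every vertex of V2 is sent uniformly into the common neighbourhood of z,
  and then every x \<in> P uniformly into the common neighbourhood of the image of S x.\<close>
definition nu :: "('a \<Rightarrow> 'b) \<Rightarrow> real" where
  "nu f = (if R_V2_adjacent f \<and> P_adjacent f
           then codeg f R ^ d / (Krd_count * codeg f R ^ card V2 * (\<Prod>x\<in>P. codeg f (S x)))
           else 0)"

definition edge_exponent :: real where
  "edge_exponent = real (card R * card V2 + (\<Sum>x\<in>P. card (S x))) / real (card R * d)"

lemma finite_maps: "finite maps"
  using finite_R finite_V2 finite_P finite_VG by (simp add: finite_PiE)

lemma card_vertices: "card (R \<union> V2 \<union> P) = card R + card V2 + card P"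
  using finite_R finite_V2 finite_P R_V2_disjoint R_P_disjoint V2_P_disjoint
  by (simp add: card_Un_disjoint Int_Un_distrib2)

lemma finite_common_nbrs: "finite (common_nbrs VG EG f X)"
  by (rule finite_subset[OF common_nbrs_subset finite_VG])

lemma card_common_nbrs_pos_iff: "card (common_nbrs VG EG f X) > 0 \<longleftrightarrow> common_nbrs VG EG f X \<noteq> {}"
  by (simp add: card_gt_0_iff finite_common_nbrs)

lemma Krd_count_nonneg: "Krd_count \<ge> 0"
  by (simp add: Krd_count_def sum_nonneg)

lemma card_VG_pos:
  assumes "Krd_count > 0"
  shows "card VG > 0"
proof (rule ccontr)
  assume "\<not> card VG > 0"
  then have "PiE R (\<lambda>_. VG) = {}"
    using finite_VG R_nonempty by (auto simp: PiE_eq_empty_iff)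
  then show False
    using assms by (simp add: Krd_count_def)
qed

lemma nu_nonneg: "nu f \<ge> 0"
  unfolding nu_def by (auto intro!: divide_nonneg_nonneg mult_nonneg_nonneg prod_nonneg Krd_count_nonneg)

lemma nu_nonzero:
  assumes "nu f \<noteq> 0"
  shows "R_V2_adjacent f" "P_adjacent f" "Krd_count > 0" "codeg f R > 0"
    and "\<And>x. x \<in> P \<Longrightarrow> codeg f (S x) > 0"
proof -
  have "R_V2_adjacent f \<and> P_adjacent f"
    and ne: "codeg f R ^ d \<noteq> 0" "Krd_count \<noteq> 0" "(\<Prod>x\<in>P. codeg f (S x)) \<noteq> 0"
    using assms by (auto simp: nu_def split: if_splits)
  then show "R_V2_adjacent f" "P_adjacent f"
    by auto
  show "Krd_count > 0"
    using ne(2) Krd_count_nonneg by linarith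
  show "codeg f R > 0"
    using ne(1) d_pos by (cases "card (common_nbrs VG EG f R) = 0") auto
  show "codeg f (S x) > 0" if "x \<in> P" for x
    using ne(3) that finite_P by (auto simp: prod_zero_iff)
qed

lemma codeg_override_on_R: "codeg (override_on g z R) R = codeg z R"
  by (intro arg_cong[where f = "\<lambda>N. real (card N)"] common_nbrs_cong) simp

lemma codeg_override_on_S:
  assumes "x \<in> P"
  shows "codeg (override_on b a (R \<union> V2)) (S x) = codeg a (S x)"
  using S_subset[OF assms] by (intro arg_cong[where f = "\<lambda>N. real (card N)"] common_nbrs_cong) auto

lemma R_V2_adjacent_override_on:
  assumes "g \<in> PiE V2 (\<lambda>_. VG)"
  shows "R_V2_adjacent (override_on g z R) \<longleftrightarrow> (\<forall>v\<in>V2. g v \<in> common_nbrs VG EG z R)"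
proof -
  have "override_on g z R v = g v" "g v \<in> VG" if "v \<in> V2" for v
    using that assms R_V2_disjoint by (auto simp: override_on_def)
  then show ?thesis
    by (auto simp: R_V2_adjacent_def common_nbrs_def)
qed

lemma P_adjacent_override_on:
  assumes "b \<in> PiE P (\<lambda>_. VG)"
  shows "P_adjacent (override_on b a (R \<union> V2)) \<longleftrightarrow> (\<forall>x\<in>P. b x \<in> common_nbrs VG EG a (S x))"
proof -
  have "override_on b a (R \<union> V2) v = a v" if "v \<in> S x" "x \<in> P" for v x
    using that S_subset[of x] by (auto simp: override_on_def)
  moreover have "override_on b a (R \<union> V2) x = b x" "b x \<in> VG" if "x \<in> P" for x
    using that assms R_P_disjoint V2_P_disjoint by (auto simp: override_on_def)
  ultimately show ?thesis
    by (auto simp: P_adjacent_def common_nbrs_def)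
qed

lemma prod_codeg_S_pos:
  assumes a: "a \<in> PiE (R \<union> V2) (\<lambda>_. VG)" and "R_V2_adjacent a"
  shows "(\<Prod>x\<in>P. codeg a (S x)) > 0"
proof -
  obtain i where i: "i \<in> R"
    using R_nonempty by blast
  have "a i \<in> common_nbrs VG EG a (S x)" if "x \<in> P" for x
  proof -
    have "EG (a v) (a i)" if "v \<in> S x" for v
    proof (rule sym_EG)
      show "EG (a i) (a v)"
        using assms(2) i S_subset \<open>x \<in> P\<close> that by (auto simp: R_V2_adjacent_def)
    qed
    then show ?thesis
      using PiE_mem[OF a] i by (auto simp: common_nbrs_def)
  qed
  then show ?thesis
    by (intro prod_pos) (auto simp: card_gt_0_iff finite_common_nbrs)
qed

text \<open>The factor codeg a (S x) counts the admissible images of x \<in> P.\<close>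
lemma sum_over_P:
  assumes F: "\<And>f g. (\<forall>i\<in>R \<union> V2. f i = g i) \<Longrightarrow> F f = F g"
    and F_supp: "\<And>a. F a \<noteq> 0 \<Longrightarrow> R_V2_adjacent a"
  shows "(\<Sum>f\<in>maps. if P_adjacent f then F f / (\<Prod>x\<in>P. codeg f (S x)) else 0) =
         (\<Sum>a\<in>PiE (R \<union> V2) (\<lambda>_. VG). F a)"
proof -
  have "(\<Sum>f\<in>maps. if P_adjacent f then F f / (\<Prod>x\<in>P. codeg f (S x)) else 0) =
        (\<Sum>a\<in>PiE (R \<union> V2) (\<lambda>_. VG). \<Sum>b\<in>PiE P (\<lambda>_. VG).
           if \<forall>x\<in>P. b x \<in> common_nbrs VG EG a (S x) then F a / (\<Prod>x\<in>P. codeg a (S x)) else 0)"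
  proof (subst sum_PiE_Un_override_on, use finite_R finite_V2 finite_P R_P_disjoint V2_P_disjoint in auto,
         intro sum.cong refl)
    fix a b assume "b \<in> PiE P (\<lambda>_. VG)"
    moreover have "F (override_on b a (R \<union> V2)) = F a"
      by (rule F) simp
    ultimately show "(if P_adjacent (override_on b a (R \<union> V2))
          then F (override_on b a (R \<union> V2)) / (\<Prod>x\<in>P. codeg (override_on b a (R \<union> V2)) (S x)) else 0) =
        (if \<forall>x\<in>P. b x \<in> common_nbrs VG EG a (S x) then F a / (\<Prod>x\<in>P. codeg a (S x)) else 0)"
      by (simp add: P_adjacent_override_on codeg_override_on_S)
  qed
  also have "\<dots> = (\<Sum>a\<in>PiE (R \<union> V2) (\<lambda>_. VG). F a / (\<Prod>x\<in>P. codeg a (S x)) * (\<Prod>x\<in>P. codeg a (S x)))"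
    by (simp add: sum_PiE_indicator finite_P finite_VG common_nbrs_subset)
  also have "\<dots> = (\<Sum>a\<in>PiE (R \<union> V2) (\<lambda>_. VG). F a)"
  proof (intro sum.cong refl)
    fix a assume a: "a \<in> PiE (R \<union> V2) (\<lambda>_. VG)"
    show "F a / (\<Prod>x\<in>P. codeg a (S x)) * (\<Prod>x\<in>P. codeg a (S x)) = F a"
    proof (cases "F a = 0")
      case False
      then show ?thesis
        using prod_codeg_S_pos[OF a F_supp[OF False]] by simp
    qed simp
  qed
  finally show ?thesis .
qed

lemma sum_nu_R_V2_marginal:
  assumes \<Phi>: "\<And>f g. (\<forall>i\<in>R \<union> V2. f i = g i) \<Longrightarrow> \<Phi> f = \<Phi> g"
  shows "(\<Sum>f\<in>maps. nu f * \<Phi> f) =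
         (\<Sum>z\<in>PiE R (\<lambda>_. VG). \<Sum>g\<in>PiE V2 (\<lambda>_. VG).
            if \<forall>v\<in>V2. g v \<in> common_nbrs VG EG z R
            then codeg z R ^ d / (Krd_count * codeg z R ^ card V2) * \<Phi> (override_on g z R) else 0)"
proof -
  define F where "F f = (if R_V2_adjacent f
    then codeg f R ^ d / (Krd_count * codeg f R ^ card V2) * \<Phi> f else 0)" for f
  have "(\<Sum>f\<in>maps. nu f * \<Phi> f) = (\<Sum>f\<in>maps. if P_adjacent f then F f / (\<Prod>x\<in>P. codeg f (S x)) else 0)"
    by (intro sum.cong refl) (simp add: nu_def F_def)
  also have "\<dots> = (\<Sum>a\<in>PiE (R \<union> V2) (\<lambda>_. VG). F a)"
  proof (rule sum_over_P)
    fix f g :: "'a \<Rightarrow> 'b" assume "\<forall>i\<in>R \<union> V2. f i = g i"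
    then have "R_V2_adjacent f = R_V2_adjacent g" "common_nbrs VG EG f R = common_nbrs VG EG g R"
      "\<Phi> f = \<Phi> g"
      by (auto simp: R_V2_adjacent_def intro!: \<Phi> common_nbrs_cong)
    then show "F f = F g"
      by (simp add: F_def)
  qed (simp add: F_def split: if_splits)
  also have "\<dots> = (\<Sum>z\<in>PiE R (\<lambda>_. VG). \<Sum>g\<in>PiE V2 (\<lambda>_. VG). F (override_on g z R))"
    by (rule sum_PiE_Un_override_on) (use finite_R finite_V2 R_V2_disjoint in auto)
  finally show ?thesis
    by (simp add: F_def R_V2_adjacent_override_on codeg_override_on_R cong: sum.cong if_cong)
qed

lemma sum_nu_marginal:
  assumes X: "X \<subseteq> V2" and \<Phi>: "\<And>f g. (\<forall>i\<in>R \<union> X. f i = g i) \<Longrightarrow> \<Phi> f = \<Phi> g"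
  shows "(\<Sum>f\<in>maps. nu f * \<Phi> f) =
         (\<Sum>z\<in>PiE R (\<lambda>_. VG). \<Sum>y\<in>PiE X (\<lambda>_. VG).
            if \<forall>v\<in>X. y v \<in> common_nbrs VG EG z R
            then codeg z R ^ d / codeg z R ^ card X * \<Phi> (override_on y z R) else 0) / Krd_count"
    (is "_ = ?rhs")
proof -
  define w where "w z = codeg z R ^ d / (Krd_count * codeg z R ^ card V2)" for z
  have w: "codeg z R ^ (card V2 - card X) * (w z * t) = codeg z R ^ d / codeg z R ^ card X * t / Krd_count"
    for z t
  proof (cases "codeg z R = 0")
    case False
    have "card X \<le> card V2"
      using card_mono[OF finite_V2 X] .
    then show ?thesis
      using False by (simp add: w_def power_diff)
  qed (use d_pos in \<open>simp add: w_def zero_power\<close>)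
  have \<Phi>_override: "\<Phi> (override_on g z R) = \<Phi> (override_on g' z R)" if "\<forall>i\<in>X. g i = g' i" for g g' z
    using that by (intro \<Phi>) (auto simp: override_on_def)
  have "(\<Sum>f\<in>maps. nu f * \<Phi> f) =
      (\<Sum>z\<in>PiE R (\<lambda>_. VG). \<Sum>g\<in>PiE V2 (\<lambda>_. VG).
         if \<forall>v\<in>V2. g v \<in> common_nbrs VG EG z R then w z * \<Phi> (override_on g z R) else 0)"
    using X by (subst sum_nu_R_V2_marginal) (auto intro: \<Phi> simp: w_def cong: if_cong)
  also have "\<dots> = (\<Sum>z\<in>PiE R (\<lambda>_. VG). codeg z R ^ (card V2 - card X) * (\<Sum>y\<in>PiE X (\<lambda>_. VG).
      if \<forall>v\<in>X. y v \<in> common_nbrs VG EG z R then w z * \<Phi> (override_on y z R) else 0))"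
    using finite_V2 finite_VG X finite_subset[OF X finite_V2] \<Phi>_override
    by (intro sum.cong refl, subst sum_PiE_indicator_restrict[where X = X])
       (auto simp: card_Diff_subset common_nbrs_def)
  also have "\<dots> = ?rhs"
    unfolding sum_divide_distrib sum_distrib_left by (intro sum.cong refl) (simp add: w)
  finally show ?thesis .
qed

lemma sum_nu_R_marginal:
  assumes \<Phi>: "\<And>f g. (\<forall>i\<in>R. f i = g i) \<Longrightarrow> \<Phi> f = \<Phi> g"
  shows "(\<Sum>f\<in>maps. nu f * \<Phi> f) = (\<Sum>z\<in>PiE R (\<lambda>_. VG). codeg z R ^ d * \<Phi> z) / Krd_count"
proof -
  have "\<Phi> (override_on y z R) = \<Phi> z" for y z
    by (rule \<Phi>) simp
  then show ?thesis
    by (subst sum_nu_marginal[of "{}"]) (auto intro: \<Phi>)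
qed

lemma sum_nu:
  assumes "Krd_count > 0"
  shows "(\<Sum>f\<in>maps. nu f) = 1"
  using sum_nu_R_marginal[of "\<lambda>_. 1"] assms by (simp add: Krd_count_def)

lemma nu_support_nonempty:
  assumes "Krd_count > 0"
  obtains f where "f \<in> maps" "nu f \<noteq> 0"
  using sum_nu[OF assms] sum.not_neutral_contains_not_neutral by (metis zero_neq_one)

lemma sum_nu_codeg_marginal:
  assumes X: "X \<subseteq> V2" "X \<noteq> {}" and G: "\<And>f g. (\<forall>i\<in>X. f i = g i) \<Longrightarrow> G f = G g"
  shows "(\<Sum>f\<in>maps. nu f * (codeg f R ^ card X / codeg f R ^ d * G f)) =
         (\<Sum>y\<in>PiE X (\<lambda>_. VG). G y * codeg y X ^ card R) / Krd_count"
proof -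
  have cancel: "(if \<forall>v\<in>X. y v \<in> common_nbrs VG EG z R then codeg z R ^ d / codeg z R ^ card X *
        (codeg (override_on y z R) R ^ card X / codeg (override_on y z R) R ^ d * G (override_on y z R))
      else 0) = (if \<forall>v\<in>X. y v \<in> common_nbrs VG EG z R then G y else 0)" for z y
  proof (cases "\<forall>v\<in>X. y v \<in> common_nbrs VG EG z R")
    case True
    obtain v where "v \<in> X"
      using X(2) by blast
    with True have "codeg z R > 0"
      by (auto simp: card_common_nbrs_pos_iff)
    moreover have "G (override_on y z R) = G y"
      using X(1) R_V2_disjoint by (intro G) (auto simp: override_on_def)
    ultimately show ?thesis
      by (simp add: codeg_override_on_R)
  next
    case False
    then show ?thesis
      by (simp only: if_not_P if_False)
  qed
  have "(\<Sum>f\<in>maps. nu f * (codeg f R ^ card X / codeg f R ^ d * G f)) =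
     (\<Sum>z\<in>PiE R (\<lambda>_. VG). \<Sum>y\<in>PiE X (\<lambda>_. VG).
        if \<forall>v\<in>X. y v \<in> common_nbrs VG EG z R then G y else 0) / Krd_count"
  proof (subst sum_nu_marginal[OF X(1)])
    show "codeg f R ^ card X / codeg f R ^ d * G f = codeg g R ^ card X / codeg g R ^ d * G g"
      if "\<forall>i\<in>R \<union> X. f i = g i" for f g
      using that common_nbrs_cong[of R f g VG EG] G[of f g] by simp
  qed (intro arg_cong2[where f = "(/)"] sum.cong refl cancel)
  also have "\<dots> = (\<Sum>y\<in>PiE X (\<lambda>_. VG). G y * codeg y X ^ card R) / Krd_count"
    using finite_subset[OF X(1) finite_V2]
    by (simp add: sum_PiE_common_nbrs_swap[OF sym_EG finite_R _ finite_VG])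
  finally show ?thesis .
qed

text \<open>Quotients of auxiliary sub-probability densities by the corresponding marginals of nu,
  to which Gibbs' inequality applies.\<close>
definition ratio_R :: "('a \<Rightarrow> 'b) \<Rightarrow> real" where
  "ratio_R f = Krd_count / (real (card VG) ^ card R * codeg f R ^ d)"

definition ratio_S :: "'a \<Rightarrow> ('a \<Rightarrow> 'b) \<Rightarrow> real" where
  "ratio_S x f = codeg f R ^ card (S x) / codeg f R ^ d *
                 (Krd_count / (real (card VG) ^ card (S x) * codeg f (S x) ^ card R))"

lemma expectation_ratio_R:
  assumes "Krd_count > 0"
  shows "(\<Sum>f\<in>maps. nu f * ratio_R f) \<le> 1"
proof -
  let ?n = "real (card VG)"
  have "(\<Sum>f\<in>maps. nu f * ratio_R f) =
        (\<Sum>z\<in>PiE R (\<lambda>_. VG). codeg z R ^ d * (Krd_count / (?n ^ card R * codeg z R ^ d))) / Krd_count"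
    unfolding ratio_R_def by (rule sum_nu_R_marginal) (simp cong: common_nbrs_cong)
  also have "\<dots> \<le> (\<Sum>z\<in>PiE R (\<lambda>_. VG). Krd_count / ?n ^ card R) / Krd_count"
    using assms by (intro divide_right_mono sum_mono) (auto simp: field_simps)
  also have "\<dots> = 1"
    using assms card_VG_pos[OF assms] finite_R by (simp add: card_PiE)
  finally show ?thesis .
qed

lemma expectation_ratio_S:
  assumes "Krd_count > 0" "x \<in> P"
  shows "(\<Sum>f\<in>maps. nu f * ratio_S x f) \<le> 1"
proof -
  let ?n = "real (card VG)" and ?s = "card (S x)"
  have "(\<Sum>f\<in>maps. nu f * ratio_S x f) =
        (\<Sum>y\<in>PiE (S x) (\<lambda>_. VG). Krd_count / (?n ^ ?s * codeg y (S x) ^ card R) * codeg y (S x) ^ card R) /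
          Krd_count"
    unfolding ratio_S_def using S_subset S_nonempty assms(2)
    by (intro sum_nu_codeg_marginal) (simp_all cong: common_nbrs_cong)
  also have "\<dots> \<le> (\<Sum>y\<in>PiE (S x) (\<lambda>_. VG). Krd_count / ?n ^ ?s) / Krd_count"
    using assms by (intro divide_right_mono sum_mono) (auto simp: field_simps)
  also have "\<dots> = 1"
    using assms card_VG_pos[OF assms(1)] finite_subset[OF S_subset finite_V2] by (simp add: card_PiE)
  finally show ?thesis .
qed

lemma expectation_inverse_nu:
  assumes "finite H" "\<And>f. f \<in> maps \<Longrightarrow> nu f \<noteq> 0 \<Longrightarrow> f \<in> H"
  shows "(\<Sum>f\<in>maps. nu f * (1 / (card H * nu f))) \<le> 1"
proof (cases "card H = 0")
  case False
  have "(\<Sum>f\<in>maps. nu f * (1 / (card H * nu f))) = (\<Sum>f\<in>maps. if nu f \<noteq> 0 then 1 / card H else 0)"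
    by (intro sum.cong refl) simp
  also have "\<dots> = card {f \<in> maps. nu f \<noteq> 0} / card H"
    using finite_maps by (simp add: sum.inter_filter[symmetric])
  also have "\<dots> \<le> 1"
  proof -
    have "card {f \<in> maps. nu f \<noteq> 0} \<le> card H"
      using assms by (intro card_mono) auto
    then show ?thesis
      using False by simp
  qed
  finally show ?thesis .
qed simp

lemma gibbs_inverse_nu:
  assumes "Krd_count > 0" "finite H" "\<And>f. f \<in> maps \<Longrightarrow> nu f \<noteq> 0 \<Longrightarrow> f \<in> H" "card H > 0"
  shows "(\<Sum>f\<in>maps. nu f * ln (1 / (card H * nu f))) \<le> 0"
  using assms expectation_inverse_nu[OF assms(2,3)]
  by (intro gibbs_inequality[OF finite_maps nu_nonneg sum_nu]) simp_all

lemma gibbs_ratio_R: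
  assumes "Krd_count > 0"
  shows "(\<Sum>f\<in>maps. nu f * ln (ratio_R f)) \<le> 0"
proof (rule gibbs_inequality[OF finite_maps nu_nonneg sum_nu[OF assms] _ expectation_ratio_R[OF assms]])
  show "0 < ratio_R f" if "nu f > 0" for f
    using nu_nonzero[of f] that card_VG_pos[OF assms] by (simp add: ratio_R_def)
qed

lemma gibbs_ratio_S:
  assumes "Krd_count > 0" "x \<in> P"
  shows "(\<Sum>f\<in>maps. nu f * ln (ratio_S x f)) \<le> 0"
proof (rule gibbs_inequality[OF finite_maps nu_nonneg sum_nu[OF assms(1)] _ expectation_ratio_S[OF assms]])
  show "0 < ratio_S x f" if "nu f > 0" for f
    using nu_nonzero[of f] that assms(2) card_VG_pos[OF assms(1)] by (simp add: ratio_S_def)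
qed

lemma ln_nu:
  assumes "nu f \<noteq> 0"
  shows "ln (nu f) = d * ln (codeg f R) - ln Krd_count - card V2 * ln (codeg f R)
                     - (\<Sum>x\<in>P. ln (codeg f (S x)))"
proof -
  note pos = nu_nonzero[OF assms]
  have "nu f = codeg f R ^ d / (Krd_count * codeg f R ^ card V2 * (\<Prod>x\<in>P. codeg f (S x)))"
    using pos(1,2) by (simp add: nu_def)
  then show ?thesis
    using pos(3-5) by (simp add: ln_div ln_mult ln_realpow prod_pos ln_prod finite_P)
qed

lemma ln_ratio_R:
  assumes "nu f \<noteq> 0"
  shows "ln (ratio_R f) = ln Krd_count - card R * ln (card VG) - d * ln (codeg f R)"
  using nu_nonzero[OF assms] card_VG_pos by (simp add: ratio_R_def ln_div ln_mult ln_realpow)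

lemma ln_ratio_S:
  assumes "nu f \<noteq> 0" "x \<in> P"
  shows "ln (ratio_S x f) = card (S x) * ln (codeg f R) - d * ln (codeg f R) + ln Krd_count
                            - card (S x) * ln (card VG) - card R * ln (codeg f (S x))"
  using nu_nonzero[OF assms(1)] assms(2) card_VG_pos by (simp add: ratio_S_def ln_div ln_mult ln_realpow)

text \<open>The weights 1, a and 1/card R make all terms involving codeg f R and codeg f (S x) cancel,
  so the combination of logarithms is the same constant on the whole support of nu.\<close>
lemma ln_combination:
  assumes "nu f \<noteq> 0" "h > 0"
  defines "a \<equiv> edge_exponent - 1 - card P / card R"
  shows "ln (1 / (h * nu f)) + a * ln (ratio_R f) + (\<Sum>x\<in>P. ln (ratio_S x f)) / card R =
         edge_exponent * (ln Krd_count - real (card R + d) * ln (card VG))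
           + real (card (R \<union> V2 \<union> P)) * ln (card VG) - ln h"
proof -
  let ?n = "real (card VG)" and ?r = "real (card R)" and ?p = "real (card P)"
    and ?\<Sigma> = "real (\<Sum>x\<in>P. card (S x))"
  define lR where "lR = ln (codeg f R)"
  define SL where "SL = (\<Sum>x\<in>P. ln (codeg f (S x)))"
  have r_pos: "?r > 0"
    using R_nonempty finite_R by (simp add: card_gt_0_iff)
  have "ln (1 / (h * nu f)) = ln Krd_count + card V2 * lR + SL - d * lR - ln h"
    using assms(1,2) nu_nonzero(3)[OF assms(1)] nu_nonneg[of f]
    by (simp add: ln_div ln_mult ln_nu lR_def SL_def)
  moreover have "ln (ratio_R f) = ln Krd_count - card R * ln ?n - d * lR"
    using ln_ratio_R[OF assms(1)] by (simp add: lR_def)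
  moreover have "(\<Sum>x\<in>P. ln (ratio_S x f)) = (?\<Sigma> - ?p * d) * lR + ?p * ln Krd_count - ?\<Sigma> * ln ?n - ?r * SL"
  proof -
    have "(\<Sum>x\<in>P. ln (ratio_S x f)) = (\<Sum>x\<in>P. card (S x) * lR - d * lR + ln Krd_count
             - card (S x) * ln ?n - card R * ln (codeg f (S x)))"
      using ln_ratio_S[OF assms(1)] by (simp add: lR_def)
    then show ?thesis
      by (simp add: SL_def sum.distrib sum_subtractf sum_distrib_left sum_distrib_right algebra_simps)
  qed
  moreover have "(ln Krd_count + card V2 * lR' + SL' - d * lR' - ln h) + a * (ln Krd_count - card R * ln ?n - d * lR')
      + ((?\<Sigma> - ?p * d) * lR' + ?p * ln Krd_count - ?\<Sigma> * ln ?n - ?r * SL') / ?r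
      = edge_exponent * (ln Krd_count - real (card R + d) * ln ?n)
          + real (card R + card V2 + card P) * ln ?n - ln h" for lR' SL' :: real
    using r_pos d_pos by (simp add: a_def edge_exponent_def field_simps)
  ultimately show ?thesis
    by (simp only: card_vertices)
qed

lemma entropy_inequality:
  assumes K: "Krd_count > 0" and H: "finite H" "\<And>f. f \<in> maps \<Longrightarrow> nu f \<noteq> 0 \<Longrightarrow> f \<in> H"
    and weight: "(card R + card P) * d \<le> card R * card V2 + (\<Sum>x\<in>P. card (S x))"
  shows "edge_exponent * (ln Krd_count - real (card R + d) * ln (card VG))
           + real (card (R \<union> V2 \<union> P)) * ln (card VG) \<le> ln (card H)"
    (is "?T \<le> _")
proof -
  let ?r = "real (card R)" and ?h = "real (card H)"
  define a where "a = edge_exponent - 1 - card P / ?r"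
  define E where "E f = ln (1 / (?h * nu f)) + a * ln (ratio_R f) + (\<Sum>x\<in>P. ln (ratio_S x f)) / ?r" for f
  have r_pos: "?r > 0"
    using R_nonempty finite_R by (simp add: card_gt_0_iff)
  obtain f0 where "f0 \<in> maps" "nu f0 \<noteq> 0"
    using nu_support_nonempty[OF K] .
  then have h_pos: "card H > 0"
    using H by (auto simp: card_gt_0_iff)
  have "a \<ge> 0"
  proof -
    have "a = real (card R * card V2 + (\<Sum>x\<in>P. card (S x)) - (card R + card P) * d) / (?r * d)"
      using r_pos d_pos weight by (simp add: a_def edge_exponent_def of_nat_diff field_simps)
    then show ?thesis
      by simp
  qed
  have "(\<Sum>f\<in>maps. nu f * E f) = (\<Sum>f\<in>maps. nu f * ln (1 / (?h * nu f)))
      + a * (\<Sum>f\<in>maps. nu f * ln (ratio_R f)) + (\<Sum>x\<in>P. \<Sum>f\<in>maps. nu f * ln (ratio_S x f)) / ?r"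
    by (simp add: E_def algebra_simps sum.distrib sum_distrib_left sum_divide_distrib sum.swap[of _ maps P])
  also have "\<dots> \<le> 0"
  proof -
    have "(\<Sum>f\<in>maps. nu f * ln (1 / (?h * nu f))) \<le> 0"
      using K H h_pos by (rule gibbs_inverse_nu)
    moreover have "a * (\<Sum>f\<in>maps. nu f * ln (ratio_R f)) \<le> 0"
      using \<open>a \<ge> 0\<close> gibbs_ratio_R[OF K] by (rule mult_nonneg_nonpos)
    moreover have "(\<Sum>x\<in>P. \<Sum>f\<in>maps. nu f * ln (ratio_S x f)) / ?r \<le> 0"
      using gibbs_ratio_S[OF K] r_pos by (simp add: divide_nonpos_pos sum_nonpos)
    ultimately show ?thesis
      by linarith
  qed
  also have "(\<Sum>f\<in>maps. nu f * E f) = (\<Sum>f\<in>maps. nu f * (?T - ln ?h))"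
  proof (intro sum.cong refl)
    fix f
    show "nu f * E f = nu f * (?T - ln ?h)"
    proof (cases "nu f = 0")
      case False
      then show ?thesis
        using ln_combination[OF False, of ?h] h_pos by (simp add: E_def a_def)
    qed simp
  qed
  also have "\<dots> = ?T - ln ?h"
    using sum_nu[OF K] by (simp flip: sum_distrib_right)
  finally show ?thesis
    by simp
qed

lemma Krd_count_eq_hom_count:
  assumes "card R = r"
  shows "Krd_count = hom_count (Krd_verts r d) (Krd_edge r d) VG EG"
proof -
  have "(\<Sum>z\<in>PiE R (\<lambda>_. VG). card (common_nbrs VG EG z R) ^ d) =
        (\<Sum>z\<in>PiE (Inl ` {..<r} :: (nat + nat) set) (\<lambda>_. VG). card (common_nbrs VG EG z (Inl ` {..<r})) ^ d)"
    using assms by (intro sum_card_common_nbrs_power_card_cong[OF sym_EG finite_R]) (auto simp: finite_VG card_image)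
  then show ?thesis
    by (simp add: Krd_count_def hom_count_Krd[OF finite_VG sym_EG] flip: of_nat_power of_nat_sum)
qed

lemma nu_support_subset_homs:
  assumes f: "f \<in> maps" "nu f \<noteq> 0"
    and edges: "\<And>u v. EH u v \<Longrightarrow>
      (u \<in> R \<and> v \<in> V2) \<or> (v \<in> R \<and> u \<in> V2) \<or> (u \<in> P \<and> v \<in> S u) \<or> (v \<in> P \<and> u \<in> S v)"
  shows "f \<in> homs (R \<union> V2 \<union> P) EH VG EG"
proof -
  have RV2: "EG (f i) (f v)" "EG (f v) (f i)" if "i \<in> R" "v \<in> V2" for i v
    using nu_nonzero(1)[OF f(2)] that sym_EG by (auto simp: R_V2_adjacent_def)
  have PS: "EG (f v) (f x)" "EG (f x) (f v)" if "x \<in> P" "v \<in> S x" for x v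
    using nu_nonzero(2)[OF f(2)] that sym_EG by (auto simp: P_adjacent_def)
  have "EG (f u) (f v)" if "EH u v" for u v
    using edges[OF that] RV2 PS by blast
  then show ?thesis
    using f(1) by (simp add: homs_def)
qed

lemma density_inequality:
  assumes H: "finite H" "\<And>f. f \<in> maps \<Longrightarrow> nu f \<noteq> 0 \<Longrightarrow> f \<in> H"
    and weight: "(card R + card P) * d \<le> card R * card V2 + (\<Sum>x\<in>P. card (S x))"
  shows "(Krd_count / real (card VG) ^ (card R + d)) powr edge_exponent
         \<le> real (card H) / real (card VG) ^ card (R \<union> V2 \<union> P)"
proof (cases "Krd_count = 0")
  case False
  then have K: "Krd_count > 0"
    using Krd_count_nonneg by simp
  let ?n = "real (card VG)"
  have n_pos: "?n > 0"
    using card_VG_pos[OF K] by simp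
  obtain f where "f \<in> maps" "nu f \<noteq> 0"
    using nu_support_nonempty[OF K] .
  then have h_pos: "real (card H) > 0"
    using H by (auto simp: card_gt_0_iff)
  have "(Krd_count / ?n ^ (card R + d)) powr edge_exponent
      = exp (edge_exponent * (ln Krd_count - real (card R + d) * ln ?n))"
    using K n_pos by (simp add: powr_def ln_div ln_realpow del: of_nat_add)
  also have "\<dots> \<le> exp (ln (card H) - real (card (R \<union> V2 \<union> P)) * ln ?n)"
    using entropy_inequality[OF K H weight] by simp
  also have "\<dots> = real (card H) / ?n ^ card (R \<union> V2 \<union> P)"
    using h_pos n_pos by (simp add: exp_diff exp_of_nat_mult)
  finally show ?thesis .
qed simp

end

lemma bipartite_pattern_from_graph:
  assumes "d > 0" "simple_graph VH EH" "V1 \<union> V2 = VH" "V1 \<inter> V2 = {}"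
    and bip: "\<forall>u v. EH u v \<longrightarrow> (u \<in> V1 \<longleftrightarrow> v \<in> V2)"
    and R: "R \<subseteq> V1" "R \<noteq> {}"
    and deg: "\<forall>x\<in>V1. degree VH EH x \<ge> d" and "simple_graph VG EG"
  shows "bipartite_pattern VG EG R V2 (V1 - R) (\<lambda>x. {y \<in> VH. EH x y}) d"
proof
  have "finite VH"
    using assms(2) by (simp add: simple_graph_def)
  then show "finite R" "finite V2" "finite (V1 - R)"
    using assms(3) R(1) by (auto intro: finite_subset)
  show "finite VG" "\<And>u v. EG u v \<Longrightarrow> EG v u"
    using assms(9) by (auto simp: simple_graph_def)
  show "R \<inter> V2 = {}" "R \<inter> (V1 - R) = {}" "V2 \<inter> (V1 - R) = {}"
    using assms(4) R(1) by auto
  show "{y \<in> VH. EH x y} \<subseteq> V2" if "x \<in> V1 - R" for x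
    using that bip by auto
  show "{y \<in> VH. EH x y} \<noteq> {}" if "x \<in> V1 - R" for x
  proof -
    have "d \<le> card {y \<in> VH. EH x y}"
      using that deg by (simp add: degree_def)
    then show ?thesis
      using assms(1) by (metis card.empty not_le)
  qed
qed (use assms(1) R(2) in auto)

theorem theorem1p3:
  fixes r d :: nat
    and VH V1 V2 :: "'a set" and EH :: "'a \<Rightarrow> 'a \<Rightarrow> bool"
    and VG :: "'b set" and EG :: "'b \<Rightarrow> 'b \<Rightarrow> bool"
  assumes "r \<ge> 1" and "d \<ge> 1"
    and "simple_graph VH EH"
    and "V1 \<union> V2 = VH" and "V1 \<inter> V2 = {}"
    and "\<forall>u v. EH u v \<longrightarrow> (u \<in> V1 \<longleftrightarrow> v \<in> V2)"
    and "\<exists>R \<subseteq> V1. card R = r \<and> (\<forall>x\<in>R. \<forall>y\<in>V2. EH x y)"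
    and "\<forall>x\<in>V1. degree VH EH x \<ge> d"
    and "simple_graph VG EG"
  shows "hom_density VH EH VG EG \<ge>
           hom_density (Krd_verts r d) (Krd_edge r d) VG EG
             powr (real (num_edges VH EH) / real (r * d))"
proof -
  obtain R where R: "R \<subseteq> V1" "card R = r" "\<forall>x\<in>R. \<forall>y\<in>V2. EH x y"
    using assms(7) by blast
  then have "R \<noteq> {}"
    using assms(1) by auto
  interpret bipartite_pattern VG EG R V2 "V1 - R" "\<lambda>x. {y \<in> VH. EH x y}" d
    using bipartite_pattern_from_graph[OF _ assms(3-6) R(1) \<open>R \<noteq> {}\<close> assms(8,9)] assms(2) by simp
  have VH: "VH = R \<union> V2 \<union> (V1 - R)"
    using assms(4) R(1) by auto
  have edges: "num_edges VH EH = card R * card V2 + (\<Sum>x\<in>V1 - R. card {y \<in> VH. EH x y})"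
    using num_edges_complete_part[OF assms(3-6) R(1,3)] by (simp add: degree_def)
  have "card V1 = card R + card (V1 - R)"
    using R(1) finite_R finite_P by (metis card_Un_disjoint Diff_disjoint Un_Diff_cancel Un_absorb1)
  then have weight: "(card R + card (V1 - R)) * d \<le> card R * card V2 + (\<Sum>x\<in>V1 - R. card {y \<in> VH. EH x y})"
    using card_mult_le_num_edges[OF assms(3-6,8)] edges by simp
  have "f \<in> homs VH EH VG EG" if "f \<in> maps" "nu f \<noteq> 0" for f
    using nu_support_subset_homs[OF that bipartite_edge_cases[OF assms(3-6) R(1)]] VH by simp
  from density_inequality[OF finite_homs[OF assms(3,9)] this weight] show ?thesis
    using Krd_count_eq_hom_count[OF R(2)] edges arg_cong[OF VH, of card, symmetric]
    by (simp add: hom_density_def hom_count_def card_Krd_verts edge_exponent_def R(2))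
qed

end
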